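(* Let $\hat q$ be an $n\times n$ and $\hat p$ an $m\times m$ parametric matrix and let $M$ be an $n\times m$ $(\hat q,\hat p)$-Manin matrix over $\mathfrak R$. Then for every $k\ge1$ the following identities hold in $\mathrm{Hom}((\mathbb C^m)^{\otimes k},(\mathbb C^n)^{\otimes k})\otimes\mathfrak R$: $$A_{\hat q}^{(k)}M_1\cdots M_k=A_{\hat q}^{(k)}M_1\cdots M_kA_{\hat p}^{(k)},\qquad M_1\cdots M_kS_{\hat p}^{(k)}=S_{\hat q}^{(k)}M_1\cdots M_kS_{\hat p}^{(k)}.$$
   Context: $\mathfrak R$ is an associative unital algebra over $\mathbb C$. A parametric $n\times n$ matrix is a matrix $\hat q=(q_{ij})$ of nonzero complex numbers with $q_{ij}q_{ji}=1$, $q_{ii}=1$. An $n\times m$ matrix $M$ over $\mathfrak R$ is a $(\hat q,\hat p)$-Manin matrix if $M_{ik}M_{jk}=q_{ji}M_{jk}M_{ik}$ for $1\le i<j\le n$, $1\le k\le m$, and $M_{ik}M_{jl}-q_{ji}p_{kl}M_{jl}M_{ik}+p_{kl}M_{il}M_{jk}-q_{ji}M_{jk}M_{il}=0$ for $i<j$, $k<l$. Let $E_{ij}$ be matrix units and $P_{\hat q}=\sum_{i,j=1}^nq_{ji}E_{ij}\otimes E_{ji}\in\mathrm{End}(\mathbb C^n\otimes\mathbb C^n)$ (so $P_{\hat q}^2=1$). The assignment $s_i=(i,i+1)\mapsto P_{\hat q}^{(i,i+1)}$ ($P_{\hat q}$ acting on tensor factors $i,i+1$ of $(\mathbb C^n)^{\otimes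 k}$) defines an action of $S_k$; write $P_{\hat q}^{\sigma}$ for the image of $\sigma\in S_k$. Set $S_{\hat q}^{(k)}=\frac1{k!}\sum_{\sigma\in S_k}P_{\hat q}^{\sigma}$ and $A_{\hat q}^{(k)}=\frac1{k!}\sum_{\sigma\in S_k}\mathrm{sgn}(\sigma)P_{\hat q}^{\sigma}$; similarly for $\hat p$ on $(\mathbb C^m)^{\otimes k}$. $M_a$ denotes $M$ acting on the $a$-th tensor factor, i.e. $1^{\otimes(a-1)}\otimes M\otimes1^{\otimes(k-a)}\in\mathrm{Hom}((\mathbb C^m)^{\otimes k},(\mathbb C^n)^{\otimes k})\otimes\mathfrak R$. *)

theory Defs
  imports Complex_Main "HOL-Combinatorics.Permutations" "HOL-Combinatorics.Transposition"
begin

text \<open>The algebra R is a unital ring 'r together with a unital ring homomorphism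
  emb from the complex numbers into the centre of 'r (this is exactly a unital
  associative C-algebra structure).  Indices are 0-based.\<close>

definition is_C_algebra :: "(complex \<Rightarrow> 'r::ring_1) \<Rightarrow> bool" where
  "is_C_algebra emb \<longleftrightarrow> emb 1 = 1 \<and> (\<forall>a b. emb (a + b) = emb a + emb b)
     \<and> (\<forall>a b. emb (a * b) = emb a * emb b) \<and> (\<forall>a x. emb a * x = x * emb a)"

definition parametric_mat :: "nat \<Rightarrow> (nat \<Rightarrow> nat \<Rightarrow> complex) \<Rightarrow> bool" where
  "parametric_mat n q \<longleftrightarrow> (\<forall>i<n. \<forall>j<n. q i j \<noteq> 0 \<and> q i j * q j i = 1) \<and> (\<forall>i<n. q i i = 1)"

definition manin :: "(complex \<Rightarrow> 'r::ring_1) \<Rightarrow> nat \<Rightarrow> nat \<Rightarrow> (nat \<Rightarrow> nat \<Rightarrow> complex)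
    \<Rightarrow> (nat \<Rightarrow> nat \<Rightarrow> complex) \<Rightarrow> (nat \<Rightarrow> nat \<Rightarrow> 'r) \<Rightarrow> bool" where
  "manin emb n m q p M \<longleftrightarrow>
     (\<forall>i j k. i < j \<and> j < n \<and> k < m \<longrightarrow> M i k * M j k = emb (q j i) * M j k * M i k) \<and>
     (\<forall>i j k l. i < j \<and> j < n \<and> k < l \<and> l < m \<longrightarrow>
        M i k * M j l - emb (q j i * p k l) * M j l * M i k + emb (p k l) * M i l * M j k
          - emb (q j i) * M j k * M i l = 0)"

text \<open>Multi-indices: lists of length k with entries < d (basis of (C^d)^{\<otimes>k}).
  Elements of Hom((C^m)^{\<otimes>k},(C^n)^{\<otimes>k}) \<otimes> R are represented by their
  matrix entries, functions of a row and a column multi-index.\<close>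

definition tuples :: "nat \<Rightarrow> nat \<Rightarrow> nat list set" where
  "tuples d k = {I. length I = k \<and> set I \<subseteq> {..<d}}"

definition matmul :: "nat \<Rightarrow> (nat list \<Rightarrow> nat list \<Rightarrow> 'r::ring_1)
    \<Rightarrow> (nat list \<Rightarrow> nat list \<Rightarrow> 'r) \<Rightarrow> nat list \<Rightarrow> nat list \<Rightarrow> 'r" where
  "matmul d X Y = (\<lambda>I J. \<Sum>L\<in>tuples d (length I). X I L * Y L J)"

definition idmat :: "nat list \<Rightarrow> nat list \<Rightarrow> 'r::ring_1" where
  "idmat = (\<lambda>I J. if I = J then 1 else 0)"

text \<open>P_q acting on tensor factors i, i+1 (0-based): P_q (e_b \<otimes> e_a) = q_{ba} e_a \<otimes> e_b.\<close>
definition adjP :: "(complex \<Rightarrow> 'r::ring_1) \<Rightarrow> (nat \<Rightarrow> nat \<Rightarrow> complex) \<Rightarrow> nat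
    \<Rightarrow> nat list \<Rightarrow> nat list \<Rightarrow> 'r" where
  "adjP emb q i = (\<lambda>I J. if Suc i < length I \<and> J = I[i := I ! Suc i, Suc i := I ! i]
                          then emb (q (I ! Suc i) (I ! i)) else 0)"

definition Pword :: "(complex \<Rightarrow> 'r::ring_1) \<Rightarrow> nat \<Rightarrow> (nat \<Rightarrow> nat \<Rightarrow> complex) \<Rightarrow> nat list
    \<Rightarrow> nat list \<Rightarrow> nat list \<Rightarrow> 'r" where
  "Pword emb d q ws = foldr (\<lambda>i A. matmul d (adjP emb q i) A) ws idmat"

definition perm_word :: "nat list \<Rightarrow> nat \<Rightarrow> nat" where
  "perm_word ws = foldr (\<lambda>i f. transpose i (Suc i) \<circ> f) ws id"

text \<open>P^\<sigma> for \<sigma> a permutation of {0..<k}: the image of any word in the adjacent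
  transpositions representing \<sigma> (well defined since s_i \<mapsto> P^{(i,i+1)} is an action).\<close>
definition Psigma :: "(complex \<Rightarrow> 'r::ring_1) \<Rightarrow> nat \<Rightarrow> (nat \<Rightarrow> nat \<Rightarrow> complex) \<Rightarrow> nat
    \<Rightarrow> (nat \<Rightarrow> nat) \<Rightarrow> nat list \<Rightarrow> nat list \<Rightarrow> 'r" where
  "Psigma emb d q k \<sigma> = Pword emb d q
     (SOME ws. set ws \<subseteq> {i. Suc i < k} \<and> perm_word ws = \<sigma>)"

definition Symm :: "(complex \<Rightarrow> 'r::ring_1) \<Rightarrow> nat \<Rightarrow> (nat \<Rightarrow> nat \<Rightarrow> complex) \<Rightarrow> nat
    \<Rightarrow> nat list \<Rightarrow> nat list \<Rightarrow> 'r" where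
  "Symm emb d q k = (\<lambda>I J. emb (1 / of_nat (fact k)) *
      (\<Sum>\<sigma>\<in>{\<sigma>. \<sigma> permutes {..<k}}. Psigma emb d q k \<sigma> I J))"

definition Antisymm :: "(complex \<Rightarrow> 'r::ring_1) \<Rightarrow> nat \<Rightarrow> (nat \<Rightarrow> nat \<Rightarrow> complex) \<Rightarrow> nat
    \<Rightarrow> nat list \<Rightarrow> nat list \<Rightarrow> 'r" where
  "Antisymm emb d q k = (\<lambda>I J. emb (1 / of_nat (fact k)) *
      (\<Sum>\<sigma>\<in>{\<sigma>. \<sigma> permutes {..<k}}. emb (of_int (sign \<sigma>)) * Psigma emb d q k \<sigma> I J))"

text \<open>M_1 M_2 ... M_k: entry (I,J) is M_{I1 J1} M_{I2 J2} ... M_{Ik Jk} (ordered product).\<close>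
definition Mtensor :: "(nat \<Rightarrow> nat \<Rightarrow> 'r::ring_1) \<Rightarrow> nat list \<Rightarrow> nat list \<Rightarrow> 'r" where
  "Mtensor M = (\<lambda>I J. prod_list (map2 M I J))"

end

(*
  Write P^q_i for P_q acting on the tensor factors i, i+1.  The Manin relations say exactly that
  (1 - P_q) M_1 M_2 (1 + P_p) = 0; applied in the factors i, i+1 of M_1 ... M_k they give
  (1 - P^q_i) M_1 ... M_k (1 + P^p_i) = 0 for every i.  Since A_q P^q_i = - A_q, multiplying on
  the left by A_q gives 2 A_q M_1 ... M_k (1 + P^p_i) = 0: the product A_q M_1 ... M_k changes
  sign under every P^p_i and therefore absorbs A_p.  Dually, P^p_i S_p = S_p turns the relation
  into (1 - P^q_i) M_1 ... M_k S_p = 0, so M_1 ... M_k S_p is fixed by every P^q_i and is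
  absorbed by S_q.  That P^sigma does not depend on the word in adjacent transpositions chosen
  for sigma follows from an explicit formula for its entries: a product of entries of q over the
  inversions of sigma.
*)

theory Submission
  imports Defs
begin

section \<open>Unital \<open>\<complex>\<close>-algebras\<close>

locale C_algebra =
  fixes emb :: "complex \<Rightarrow> 'r::ring_1"
  assumes is_C_algebra: "is_C_algebra emb"
begin

lemma emb_1 [simp]: "emb 1 = 1"
  and emb_add: "emb (a + b) = emb a + emb b"
  and emb_mult: "emb (a * b) = emb a * emb b"
  and emb_commute: "emb a * x = x * emb a"
  using is_C_algebra unfolding is_C_algebra_def by blast+

sublocale emb: additive emb
  by unfold_locales (rule emb_add)

lemma emb_of_nat [simp]: "emb (of_nat j) = of_nat j"
  by (induction j) (simp_all add: emb_add emb.zero)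

lemma emb_power: "emb (a ^ j) = emb a ^ j"
  by (induction j) (simp_all add: emb_mult)

lemma emb_left_commute: "x * (emb a * y) = emb a * (x * y)"
  by (metis emb_commute mult.assoc)

lemma emb_left_commute_emb: "emb a * (emb b * x) = emb b * (emb a * x)"
  by (simp add: mult.assoc [symmetric] mult.commute flip: emb_mult)

lemma emb_inverse_cancel:
  assumes "j \<noteq> 0"
  shows "emb (1 / of_nat j) * (of_nat j * x) = x"
proof -
  have "emb (1 / of_nat j) * of_nat j = 1"
    using assms by (simp flip: emb_of_nat emb_mult)
  then show ?thesis
    by (simp flip: mult.assoc)
qed

lemma eq_uminus_imp_eq_0:
  fixes x :: 'r
  assumes "x = - x"
  shows "x = 0"
proof -
  have "x = emb (1/2) * x + emb (1/2) * x"
    by (simp flip: distrib_right emb_add)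
  also have "\<dots> = emb (1/2) * x + emb (1/2) * - x"
    using assms by simp
  finally show ?thesis by simp
qed

end

section \<open>Matrices indexed by multi-indices\<close>

lemma finite_tuples [simp]: "finite (tuples d k)"
  using finite_lists_length_eq[of "{..<d}" k] unfolding tuples_def by (simp add: conj_commute)

lemma matmul_assoc:
  "matmul d' (matmul d X Y) Z I J = matmul d X (matmul d' Y Z) I J"
proof -
  have "matmul d' (matmul d X Y) Z I J
      = (\<Sum>L\<in>tuples d' (length I). \<Sum>L'\<in>tuples d (length I). X I L' * Y L' L * Z L J)"
    by (simp add: matmul_def sum_distrib_right)
  also have "\<dots> = (\<Sum>L'\<in>tuples d (length I). \<Sum>L\<in>tuples d' (length I). X I L' * Y L' L * Z L J)"
    by (rule sum.swap)
  also have "\<dots> = matmul d X (matmul d' Y Z) I J"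
    by (auto simp: matmul_def sum_distrib_left mult.assoc tuples_def intro!: sum.cong)
  finally show ?thesis .
qed

lemma matmul_cong:
  assumes "\<And>L. L \<in> tuples d (length I) \<Longrightarrow> X I L = X' I L"
    and "\<And>L. L \<in> tuples d (length I) \<Longrightarrow> Y L J = Y' L J"
  shows "matmul d X Y I J = matmul d X' Y' I J"
  using assms by (simp add: matmul_def)

lemma matmul_add_right:
  "matmul d X (\<lambda>I J. Y I J + Z I J) I J = matmul d X Y I J + matmul d X Z I J"
  by (simp add: matmul_def distrib_left sum.distrib)

lemma matmul_diff_left:
  "matmul d (\<lambda>I J. X I J - Y I J) Z I J = matmul d X Z I J - matmul d Y Z I J"
  by (simp add: matmul_def left_diff_distrib sum_subtractf)

lemma matmul_uminus_left:
  "matmul d (\<lambda>I J. - X I J) Y I J = - matmul d X Y I J"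
  by (simp add: matmul_def sum_negf)

lemma matmul_scale_left:
  "matmul d (\<lambda>I J. c * X I J) Y I J = c * matmul d X Y I J"
  by (simp add: matmul_def sum_distrib_left mult.assoc)

lemma matmul_sum_left:
  "matmul d (\<lambda>I J. \<Sum>\<sigma>\<in>S. X \<sigma> I J) Y I J = (\<Sum>\<sigma>\<in>S. matmul d (X \<sigma>) Y I J)"
  by (simp add: matmul_def sum_distrib_right sum.swap [where A = S])

lemma matmul_sum_right:
  "matmul d Y (\<lambda>I J. \<Sum>\<sigma>\<in>S. X \<sigma> I J) I J = (\<Sum>\<sigma>\<in>S. matmul d Y (X \<sigma>) I J)"
  by (simp add: matmul_def sum_distrib_left sum.swap [where A = S])

lemma matmul_idmat_left:
  assumes "I \<in> tuples d k"
  shows "matmul d idmat X I J = X I J"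
proof -
  have "(\<Sum>L\<in>tuples d (length I). idmat I L * X L J) = (\<Sum>L\<in>tuples d (length I). if I = L then X I J else 0)"
    by (rule sum.cong) (simp_all add: idmat_def)
  moreover have "I \<in> tuples d (length I)"
    using assms by (simp add: tuples_def)
  ultimately show ?thesis
    by (simp add: matmul_def)
qed

lemma matmul_idmat_right:
  assumes "J \<in> tuples d (length I)"
  shows "matmul d X idmat I J = X I J"
proof -
  have "(\<Sum>L\<in>tuples d (length I). X I L * idmat L J) = (\<Sum>L\<in>tuples d (length I). if L = J then X I J else 0)"
    by (rule sum.cong) (simp_all add: idmat_def)
  then show ?thesis
    using assms by (simp add: matmul_def)
qed

abbreviation adj_swap :: "nat \<Rightarrow> nat \<Rightarrow> nat" where
  "adj_swap i \<equiv> transpose i (Suc i)"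

lemma adj_swap_permutes: "Suc i < k \<Longrightarrow> adj_swap i permutes {..<k}"
  by (intro permutes_swap_id) auto

lemma permute_list_tuples:
  "\<sigma> permutes {..<k} \<Longrightarrow> I \<in> tuples d k \<Longrightarrow> permute_list \<sigma> I \<in> tuples d k"
  by (simp add: tuples_def)

lemma permute_list_adj_swap:
  "Suc i < length I \<Longrightarrow> permute_list (adj_swap i) I = I[i := I ! Suc i, Suc i := I ! i]"
  by (intro nth_equalityI) (auto simp: permute_list_nth adj_swap_permutes nth_list_update)

lemma permute_list_adj_swap_twice:
  "Suc i < length I \<Longrightarrow> permute_list (adj_swap i) (permute_list (adj_swap i) I) = I"
  by (simp flip: permute_list_compose add: adj_swap_permutes)

lemma permute_list_adj_swap_split:
  assumes "Suc i < length I"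
  shows "permute_list (adj_swap i) I = take i I @ I ! Suc i # I ! i # drop (Suc (Suc i)) I"
  using assms by (simp add: permute_list_adj_swap upd_conv_take_nth_drop Cons_nth_drop_Suc
      take_Suc_conv_app_nth)

lemma adjP_matmul:
  assumes "Suc i < k" "I \<in> tuples d k"
  shows "matmul d (adjP emb q i) X I J
    = emb (q (I ! Suc i) (I ! i)) * X (permute_list (adj_swap i) I) J"
proof -
  have "length I = k"
    using assms(2) by (simp add: tuples_def)
  then have "matmul d (adjP emb q i) X I J = (\<Sum>L\<in>tuples d k.
      if L = permute_list (adj_swap i) I then emb (q (I ! Suc i) (I ! i)) * X L J else 0)"
    unfolding matmul_def using assms(1) by (intro sum.cong) (auto simp: adjP_def permute_list_adj_swap)
  then show ?thesis
    using permute_list_tuples[OF adj_swap_permutes assms(2)] assms(1) by simp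
qed

lemma matmul_adjP:
  assumes "Suc i < k" "J \<in> tuples d k" "length I = k"
  shows "matmul d X (adjP emb q i) I J
    = X I (permute_list (adj_swap i) J) * emb (q (J ! i) (J ! Suc i))"
proof -
  have "length J = k"
    using assms(2) by (simp add: tuples_def)
  have "adjP emb q i L J = (if L = permute_list (adj_swap i) J then emb (q (J ! i) (J ! Suc i)) else 0)"
    if "L \<in> tuples d k" for L
    using that assms(1) \<open>length J = k\<close> permute_list_adj_swap_twice[of i L] permute_list_adj_swap_twice[of i J]
    by (auto simp: adjP_def tuples_def permute_list_adj_swap [symmetric] permute_list_nth adj_swap_permutes)
  then have "matmul d X (adjP emb q i) I J = (\<Sum>L\<in>tuples d k.
      if L = permute_list (adj_swap i) J then X I L * emb (q (J ! i) (J ! Suc i)) else 0)"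
    unfolding matmul_def assms(3) by (intro sum.cong) auto
  then show ?thesis
    using permute_list_tuples[OF adj_swap_permutes assms(2)] assms(1) by simp
qed

section \<open>Words in adjacent transpositions\<close>

lemma perm_word_Nil [simp]: "perm_word [] = id"
  by (simp add: perm_word_def)

lemma perm_word_Cons: "perm_word (i # ws) = adj_swap i \<circ> perm_word ws"
  by (simp add: perm_word_def)

lemma perm_word_append: "perm_word (ws @ vs) = perm_word ws \<circ> perm_word vs"
  by (induction ws) (simp_all add: perm_word_Cons o_assoc)

lemma perm_word_permutes: "set ws \<subseteq> {i. Suc i < k} \<Longrightarrow> perm_word ws permutes {..<k}"
  by (induction ws) (auto simp: perm_word_Cons permutes_id adj_swap_permutes intro: permutes_compose)

lemma sign_perm_word: "sign (perm_word ws) = (-1) ^ length ws"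
proof (induction ws)
  case Nil
  show ?case by (simp add: sign_id)
next
  case (Cons i ws)
  have "permutation (perm_word ws)"
    by (induction ws) (simp_all only: perm_word_Nil perm_word_Cons permutation_id
        permutation_compose permutation_swap_id)
  then have "sign (perm_word (i # ws)) = sign (adj_swap i) * sign (perm_word ws)"
    unfolding perm_word_Cons by (rule sign_compose[OF permutation_swap_id])
  then show ?case
    using Cons.IH by (simp add: sign_swap_id)
qed

lemma transpose_eq_perm_word:
  assumes "a < b" "b < k"
  shows "\<exists>ws. set ws \<subseteq> {i. Suc i < k} \<and> perm_word ws = transpose a b"
  using assms
proof (induction b)
  case 0
  then show ?case by simp
next
  case (Suc b)
  show ?case
  proof (cases "a = b")
    case True
    then show ?thesis
      using Suc.prems by (intro exI[of _ "[a]"]) (simp add: perm_word_Cons)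
  next
    case False
    with Suc obtain ws where ws: "set ws \<subseteq> {i. Suc i < k}" "perm_word ws = transpose a b"
      by auto
    have "transpose a (Suc b) = adj_swap b \<circ> transpose a b \<circ> adj_swap b"
      using False Suc.prems by (auto simp: fun_eq_iff transpose_def)
    then show ?thesis
      using ws Suc.prems
      by (intro exI[of _ "b # ws @ [b]"]) (simp add: perm_word_Cons perm_word_append o_assoc)
  qed
qed

lemma permutes_eq_perm_word:
  assumes "\<sigma> permutes {..<k}"
  shows "\<exists>ws. set ws \<subseteq> {i. Suc i < k} \<and> perm_word ws = \<sigma>"
  using assms finite_lessThan
proof (induction rule: permutes_induct)
  case id
  show ?case by (intro exI[of _ "[]"]) simp
next
  case (swap a b \<tau>)
  obtain ws where ws: "set ws \<subseteq> {i. Suc i < k}" "perm_word ws = \<tau>"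
    using swap.IH by blast
  obtain vs where vs: "set vs \<subseteq> {i. Suc i < k}" "perm_word vs = transpose a b"
    using transpose_eq_perm_word[of a b k] transpose_eq_perm_word[of b a k] swap.hyps
    by (cases a b rule: linorder_cases) (auto simp: transpose_commute intro: exI[of _ "[]"])
  show ?case
    using ws vs by (intro exI[of _ "vs @ ws"]) (simp add: perm_word_append)
qed

definition inversions :: "nat \<Rightarrow> (nat \<Rightarrow> nat) \<Rightarrow> (nat \<times> nat) set" where
  "inversions k \<sigma> = {(a, b). a < b \<and> b < k \<and> \<sigma> b < \<sigma> a}"

definition perm_coeff :: "(nat \<Rightarrow> nat \<Rightarrow> complex) \<Rightarrow> nat \<Rightarrow> (nat \<Rightarrow> nat) \<Rightarrow> nat list \<Rightarrow> complex" where
  "perm_coeff q k \<sigma> J = (\<Prod>(a, b)\<in>inversions k \<sigma>. q (J ! a) (J ! b))"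

lemma finite_inversions: "finite (inversions k \<sigma>)"
  by (rule finite_subset[of _ "{..<k} \<times> {..<k}"]) (auto simp: inversions_def)

lemma inversions_id [simp]: "inversions k id = {}"
  by (auto simp: inversions_def)

lemma inversions_adj_swap_comp:
  assumes "inj \<sigma>" "a < k" "b < k" "\<sigma> a = i" "\<sigma> b = Suc i"
  shows "inversions k (adj_swap i \<circ> \<sigma>)
    = (if a < b then insert (a, b) (inversions k \<sigma>) else inversions k \<sigma> - {(b, a)})"
proof -
  have ne: "\<sigma> x \<noteq> i \<and> \<sigma> x \<noteq> Suc i" if "x \<noteq> a" "x \<noteq> b" for x
    using that assms by (metis injD)
  have "adj_swap i (\<sigma> v) < adj_swap i (\<sigma> u) \<longleftrightarrow>
      (if (u, v) = (a, b) then True else if (u, v) = (b, a) then False else \<sigma> v < \<sigma> u)" for u v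
    using assms(4,5) ne[of u] ne[of v]
    by (cases "u = a"; cases "u = b"; cases "v = a"; cases "v = b") (auto simp: transpose_def)
  then show ?thesis
    using assms(2-5) unfolding inversions_def by auto
qed

lemma perm_coeff_adj_swap_comp:
  assumes "inj \<sigma>" "a < k" "b < k" "\<sigma> a = i" "\<sigma> b = Suc i"
    and "q (J ! a) (J ! b) * q (J ! b) (J ! a) = 1"
  shows "perm_coeff q k (adj_swap i \<circ> \<sigma>) J = q (J ! a) (J ! b) * perm_coeff q k \<sigma> J"
proof (cases "a < b")
  case True
  then have "(a, b) \<notin> inversions k \<sigma>"
    using assms(4,5) by (simp add: inversions_def)
  then show ?thesis
    using True by (simp add: perm_coeff_def inversions_adj_swap_comp[OF assms(1-5)] finite_inversions)
next
  case False
  moreover have "a \<noteq> b"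
    using assms(4,5) by auto
  ultimately have "(b, a) \<in> inversions k \<sigma>"
    using assms(2-5) by (auto simp: inversions_def)
  then have "perm_coeff q k \<sigma> J = q (J ! b) (J ! a) * perm_coeff q k (adj_swap i \<circ> \<sigma>) J"
    using False by (simp add: perm_coeff_def inversions_adj_swap_comp[OF assms(1-5)] finite_inversions
        prod.remove)
  then show ?thesis
    using assms(6) by (simp add: mult.assoc [symmetric])
qed

section \<open>The operators \<open>P\<^sup>\<sigma>\<close> and the (anti)symmetrizers\<close>

lemma Pword_Cons: "Pword emb d q (i # ws) = matmul d (adjP emb q i) (Pword emb d q ws)"
  by (simp add: Pword_def)

lemma Pword_snoc:
  assumes "I \<in> tuples d k" "J \<in> tuples d k"
  shows "matmul d (Pword emb d q ws) (adjP emb q i) I J = Pword emb d q (ws @ [i]) I J"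
  using assms(1)
proof (induction ws arbitrary: I)
  case Nil
  then have "J \<in> tuples d (length I)"
    using assms(2) by (simp add: tuples_def)
  then show ?case
    using Nil by (simp add: Pword_def matmul_idmat_left matmul_idmat_right)
next
  case (Cons j ws)
  then have "length I = k"
    by (simp add: tuples_def)
  have "matmul d (Pword emb d q (j # ws)) (adjP emb q i) I J
      = matmul d (adjP emb q j) (matmul d (Pword emb d q ws) (adjP emb q i)) I J"
    unfolding Pword_Cons by (rule matmul_assoc)
  also have "\<dots> = matmul d (adjP emb q j) (Pword emb d q (ws @ [i])) I J"
    by (rule matmul_cong) (simp_all add: \<open>length I = k\<close> Cons.IH)
  finally show ?case
    by (simp add: Pword_Cons)
qed

lemma matmul_Pword_alternating:
  assumes "length I = k" "set ws \<subseteq> {i. Suc i < k}" "J \<in> tuples d k"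
    and "\<And>i J. Suc i < k \<Longrightarrow> J \<in> tuples d k \<Longrightarrow> matmul d X (adjP emb q i) I J = - X I J"
  shows "matmul d X (Pword emb d q ws) I J = (-1) ^ length ws * X I J"
  using assms(2)
proof (induction ws)
  case Nil
  then show ?case
    using assms(1,3) by (simp add: Pword_def matmul_idmat_right)
next
  case (Cons i ws)
  have "matmul d X (Pword emb d q (i # ws)) I J
      = matmul d (matmul d X (adjP emb q i)) (Pword emb d q ws) I J"
    unfolding Pword_Cons by (rule matmul_assoc [symmetric])
  also have "\<dots> = matmul d (\<lambda>I J. - X I J) (Pword emb d q ws) I J"
    using Cons.prems by (intro matmul_cong) (simp_all add: assms(1,4))
  also have "\<dots> = (-1) ^ length (i # ws) * X I J"
    using Cons by (simp add: matmul_uminus_left)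
  finally show ?case .
qed

lemma Pword_matmul_fixed:
  assumes "I \<in> tuples d k" "set ws \<subseteq> {i. Suc i < k}"
    and "\<And>i I. Suc i < k \<Longrightarrow> I \<in> tuples d k \<Longrightarrow> matmul d (adjP emb q i) Y I J = Y I J"
  shows "matmul d (Pword emb d q ws) Y I J = Y I J"
  using assms(1,2)
proof (induction ws arbitrary: I)
  case Nil
  then show ?case
    by (simp add: Pword_def matmul_idmat_left)
next
  case (Cons i ws)
  then have "length I = k"
    by (simp add: tuples_def)
  have "matmul d (Pword emb d q (i # ws)) Y I J
      = matmul d (adjP emb q i) (matmul d (Pword emb d q ws) Y) I J"
    unfolding Pword_Cons by (rule matmul_assoc)
  also have "\<dots> = matmul d (adjP emb q i) Y I J"
    using Cons by (intro matmul_cong) (simp_all add: \<open>length I = k\<close>)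
  also have "\<dots> = Y I J"
    using Cons.prems by (simp add: assms(3))
  finally show ?case .
qed

context C_algebra
begin

text \<open>The entries of \<^const>\<open>Pword\<close> depend only on the permutation the word represents,
  so \<^const>\<open>Psigma\<close> does not depend on the word picked by its \<open>SOME\<close>.\<close>

lemma Pword_entry:
  assumes "parametric_mat d q" "set ws \<subseteq> {i. Suc i < k}" "I \<in> tuples d k" "J \<in> tuples d k"
  shows "Pword emb d q ws I J
    = (if J = permute_list (perm_word ws) I then emb (perm_coeff q k (perm_word ws) J) else 0)"
  using assms(2,3)
proof (induction ws arbitrary: I)
  case Nil
  then show ?case
    by (auto simp: Pword_def idmat_def perm_coeff_def)
next
  case (Cons i ws)
  let ?\<sigma> = "perm_word ws"
  let ?I' = "permute_list (adj_swap i) I"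
  have i: "Suc i < k" and ws: "set ws \<subseteq> {i. Suc i < k}"
    using Cons.prems by auto
  have \<sigma>: "?\<sigma> permutes {..<k}"
    using perm_word_permutes[OF ws] .
  have "length I = k"
    using Cons.prems by (simp add: tuples_def)
  have perm: "permute_list ?\<sigma> ?I' = permute_list (perm_word (i # ws)) I"
    using \<sigma> \<open>length I = k\<close> by (simp add: perm_word_Cons permute_list_compose)
  have "Pword emb d q (i # ws) I J = emb (q (I ! Suc i) (I ! i)) * Pword emb d q ws ?I' J"
    unfolding Pword_Cons using adjP_matmul[OF i Cons.prems(2)] .
  also have "\<dots> = emb (q (I ! Suc i) (I ! i)) *
      (if J = permute_list (perm_word (i # ws)) I then emb (perm_coeff q k ?\<sigma> J) else 0)"
    using Cons.IH[OF ws permute_list_tuples[OF adj_swap_permutes[OF i] Cons.prems(2)]] perm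
    by simp
  also have "\<dots> = (if J = permute_list (perm_word (i # ws)) I
      then emb (perm_coeff q k (perm_word (i # ws)) J) else 0)"
  proof (cases "J = permute_list (perm_word (i # ws)) I")
    case True
    define a b where "a = inv ?\<sigma> i" and "b = inv ?\<sigma> (Suc i)"
    have ab: "a < k" "b < k" "?\<sigma> a = i" "?\<sigma> b = Suc i"
      using i permutes_inv[OF \<sigma>, THEN permutes_in_image] permutes_inverses(1)[OF \<sigma>]
      by (auto simp: a_def b_def)
    have J_ab: "J ! a = I ! Suc i" "J ! b = I ! i"
      using True ab \<open>length I = k\<close> perm_word_permutes[of "i # ws" k] i ws
      by (simp_all add: permute_list_nth perm_word_Cons)
    have "J ! a \<in> set J" "J ! b \<in> set J"
      using assms(4) ab(1,2) by (simp_all add: tuples_def)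
    then have "J ! a < d" "J ! b < d"
      using assms(4) by (auto simp: tuples_def)
    then have "q (J ! a) (J ! b) * q (J ! b) (J ! a) = 1"
      using assms(1) by (simp add: parametric_mat_def)
    then show ?thesis
      using True J_ab perm_coeff_adj_swap_comp[OF permutes_inj[OF \<sigma>] ab]
      by (simp add: perm_word_Cons emb_mult)
  qed simp
  finally show ?case .
qed

lemma Psigma_perm_word:
  assumes "parametric_mat d q" "set ws \<subseteq> {i. Suc i < k}" "I \<in> tuples d k" "J \<in> tuples d k"
  shows "Psigma emb d q k (perm_word ws) I J = Pword emb d q ws I J"
proof -
  let ?P = "\<lambda>vs. set vs \<subseteq> {i. Suc i < k} \<and> perm_word vs = perm_word ws"
  have "?P (SOME vs. ?P vs)"
    by (rule someI[of ?P ws]) (simp add: assms(2))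
  then show ?thesis
    using Pword_entry[OF assms(1) _ assms(3,4)] assms(2) by (simp add: Psigma_def)
qed

lemma Psigma_eq_Pword:
  assumes "parametric_mat d q" "\<sigma> permutes {..<k}"
  obtains ws where "set ws \<subseteq> {i. Suc i < k}" "perm_word ws = \<sigma>"
    "\<And>I J. I \<in> tuples d k \<Longrightarrow> J \<in> tuples d k \<Longrightarrow> Psigma emb d q k \<sigma> I J = Pword emb d q ws I J"
  using permutes_eq_perm_word[OF assms(2)] Psigma_perm_word[OF assms(1)] by blast

lemma adjP_Psigma:
  assumes "parametric_mat d q" "\<sigma> permutes {..<k}" "Suc i < k" "I \<in> tuples d k" "J \<in> tuples d k"
  shows "matmul d (adjP emb q i) (Psigma emb d q k \<sigma>) I J = Psigma emb d q k (adj_swap i \<circ> \<sigma>) I J"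
proof -
  obtain ws where ws: "set ws \<subseteq> {i. Suc i < k}" "perm_word ws = \<sigma>"
    and P: "\<And>I J. I \<in> tuples d k \<Longrightarrow> J \<in> tuples d k \<Longrightarrow> Psigma emb d q k \<sigma> I J = Pword emb d q ws I J"
    using Psigma_eq_Pword[OF assms(1,2)] by blast
  have "length I = k"
    using assms(4) by (simp add: tuples_def)
  then have "matmul d (adjP emb q i) (Psigma emb d q k \<sigma>) I J = Pword emb d q (i # ws) I J"
    unfolding Pword_Cons by (intro matmul_cong) (simp_all add: P assms(5))
  also have "\<dots> = Psigma emb d q k (adj_swap i \<circ> \<sigma>) I J"
    using Psigma_perm_word[OF assms(1) _ assms(4,5), of "i # ws"] ws assms(3)
    by (simp add: perm_word_Cons)
  finally show ?thesis .
qed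

lemma Psigma_adjP:
  assumes "parametric_mat d q" "\<sigma> permutes {..<k}" "Suc i < k" "I \<in> tuples d k" "J \<in> tuples d k"
  shows "matmul d (Psigma emb d q k \<sigma>) (adjP emb q i) I J = Psigma emb d q k (\<sigma> \<circ> adj_swap i) I J"
proof -
  obtain ws where ws: "set ws \<subseteq> {i. Suc i < k}" "perm_word ws = \<sigma>"
    and P: "\<And>I J. I \<in> tuples d k \<Longrightarrow> J \<in> tuples d k \<Longrightarrow> Psigma emb d q k \<sigma> I J = Pword emb d q ws I J"
    using Psigma_eq_Pword[OF assms(1,2)] by blast
  have "length I = k"
    using assms(4) by (simp add: tuples_def)
  then have "matmul d (Psigma emb d q k \<sigma>) (adjP emb q i) I J
      = matmul d (Pword emb d q ws) (adjP emb q i) I J"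
    by (intro matmul_cong) (simp_all add: P assms(4))
  also have "\<dots> = Pword emb d q (ws @ [i]) I J"
    by (rule Pword_snoc[OF assms(4,5)])
  also have "\<dots> = Psigma emb d q k (\<sigma> \<circ> adj_swap i) I J"
    using Psigma_perm_word[OF assms(1) _ assms(4,5), of "ws @ [i]"] ws assms(3)
    by (simp add: perm_word_append perm_word_Cons)
  finally show ?thesis .
qed

lemma matmul_emb_right:
  "matmul d Y (\<lambda>I J. emb c * X I J) I J = emb c * matmul d Y X I J"
  by (simp add: matmul_def sum_distrib_left emb_left_commute)

lemma Antisymm_adjP:
  assumes "parametric_mat d q" "Suc i < k" "I \<in> tuples d k" "J \<in> tuples d k"
  shows "matmul d (Antisymm emb d q k) (adjP emb q i) I J = - Antisymm emb d q k I J"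
proof -
  let ?S = "{\<sigma>. \<sigma> permutes {..<k}}"
  let ?t = "\<lambda>\<sigma>. emb (of_int (sign \<sigma>)) * Psigma emb d q k \<sigma> I J"
  have "matmul d (Antisymm emb d q k) (adjP emb q i) I J = emb (1 / of_nat (fact k)) *
      (\<Sum>\<sigma>\<in>?S. emb (of_int (sign \<sigma>)) * Psigma emb d q k (\<sigma> \<circ> adj_swap i) I J)"
    using Psigma_adjP[OF assms(1) _ assms(2-4)]
    by (simp add: Antisymm_def matmul_scale_left matmul_sum_left)
  also have "(\<Sum>\<sigma>\<in>?S. emb (of_int (sign \<sigma>)) * Psigma emb d q k (\<sigma> \<circ> adj_swap i) I J)
      = (\<Sum>\<sigma>\<in>?S. emb (of_int (sign (\<sigma> \<circ> adj_swap i)))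
          * Psigma emb d q k (\<sigma> \<circ> adj_swap i \<circ> adj_swap i) I J)"
    by (rule sum_permutations_compose_right[OF adj_swap_permutes[OF assms(2)]])
  also have "\<dots> = (\<Sum>\<sigma>\<in>?S. - ?t \<sigma>)"
  proof (rule sum.cong [OF refl])
    fix \<sigma> assume "\<sigma> \<in> ?S"
    then have "sign (\<sigma> \<circ> adj_swap i) = sign \<sigma> * sign (adj_swap i)"
      by (intro sign_compose permutation_swap_id permutes_imp_permutation[of "{..<k}"]) auto
    then have "sign (\<sigma> \<circ> adj_swap i) = - sign \<sigma>"
      by (simp add: sign_swap_id)
    then show "emb (of_int (sign (\<sigma> \<circ> adj_swap i)))
        * Psigma emb d q k (\<sigma> \<circ> adj_swap i \<circ> adj_swap i) I J = - ?t \<sigma>"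
      by (simp add: o_assoc [symmetric] emb.minus)
  qed
  finally show ?thesis
    by (simp add: Antisymm_def sum_negf)
qed

lemma adjP_Symm:
  assumes "parametric_mat d q" "Suc i < k" "I \<in> tuples d k" "J \<in> tuples d k"
  shows "matmul d (adjP emb q i) (Symm emb d q k) I J = Symm emb d q k I J"
proof -
  let ?S = "{\<sigma>. \<sigma> permutes {..<k}}"
  have "matmul d (adjP emb q i) (Symm emb d q k) I J
      = emb (1 / of_nat (fact k)) * (\<Sum>\<sigma>\<in>?S. Psigma emb d q k (adj_swap i \<circ> \<sigma>) I J)"
    using adjP_Psigma[OF assms(1) _ assms(2-4)]
    by (simp add: Symm_def matmul_emb_right matmul_sum_right)
  also have "(\<Sum>\<sigma>\<in>?S. Psigma emb d q k (adj_swap i \<circ> \<sigma>) I J) = (\<Sum>\<sigma>\<in>?S. Psigma emb d q k \<sigma> I J)"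
    by (rule setum_permutations_compose_left[OF adj_swap_permutes[OF assms(2)], symmetric])
  finally show ?thesis
    by (simp add: Symm_def)
qed

lemma matmul_Antisymm_absorb:
  assumes "parametric_mat d q" "length I = k" "J \<in> tuples d k"
    and "\<And>i J. Suc i < k \<Longrightarrow> J \<in> tuples d k \<Longrightarrow> matmul d X (adjP emb q i) I J = - X I J"
  shows "matmul d X (Antisymm emb d q k) I J = X I J"
proof -
  let ?S = "{\<sigma>. \<sigma> permutes {..<k}}"
  have "matmul d X (Antisymm emb d q k) I J = emb (1 / of_nat (fact k)) *
      (\<Sum>\<sigma>\<in>?S. emb (of_int (sign \<sigma>)) * matmul d X (Psigma emb d q k \<sigma>) I J)"
    by (simp add: Antisymm_def matmul_emb_right matmul_sum_right)
  also have "(\<Sum>\<sigma>\<in>?S. emb (of_int (sign \<sigma>)) * matmul d X (Psigma emb d q k \<sigma>) I J)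
      = (\<Sum>\<sigma>\<in>?S. X I J)"
  proof (rule sum.cong [OF refl])
    fix \<sigma> assume "\<sigma> \<in> ?S"
    then obtain ws where ws: "set ws \<subseteq> {i. Suc i < k}" "perm_word ws = \<sigma>"
      and P: "\<And>I J. I \<in> tuples d k \<Longrightarrow> J \<in> tuples d k \<Longrightarrow> Psigma emb d q k \<sigma> I J = Pword emb d q ws I J"
      using Psigma_eq_Pword[OF assms(1)] by blast
    have "matmul d X (Psigma emb d q k \<sigma>) I J = matmul d X (Pword emb d q ws) I J"
      by (intro matmul_cong) (simp_all add: P assms(2,3))
    also have "\<dots> = (-1) ^ length ws * X I J"
      by (rule matmul_Pword_alternating[OF assms(2) ws(1) assms(3,4)])
    moreover have "sign \<sigma> = (-1) ^ length ws"
      using ws(2) sign_perm_word by blast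
    ultimately show "emb (of_int (sign \<sigma>)) * matmul d X (Psigma emb d q k \<sigma>) I J = X I J"
      by (simp add: emb_power emb.minus mult.assoc [symmetric] flip: power_add mult_2)
  qed
  also have "(\<Sum>\<sigma>\<in>?S. X I J) = of_nat (fact k) * X I J"
    by (simp add: card_permutations)
  finally show ?thesis
    using emb_inverse_cancel[of "fact k"] by simp
qed

lemma Symm_matmul_absorb:
  assumes "parametric_mat d q" "I \<in> tuples d k"
    and "\<And>i I. Suc i < k \<Longrightarrow> I \<in> tuples d k \<Longrightarrow> matmul d (adjP emb q i) Y I J = Y I J"
  shows "matmul d (Symm emb d q k) Y I J = Y I J"
proof -
  let ?S = "{\<sigma>. \<sigma> permutes {..<k}}"
  have "matmul d (Symm emb d q k) Y I J
      = emb (1 / of_nat (fact k)) * (\<Sum>\<sigma>\<in>?S. matmul d (Psigma emb d q k \<sigma>) Y I J)"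
    by (simp add: Symm_def matmul_scale_left matmul_sum_left)
  also have "(\<Sum>\<sigma>\<in>?S. matmul d (Psigma emb d q k \<sigma>) Y I J) = (\<Sum>\<sigma>\<in>?S. Y I J)"
  proof (rule sum.cong [OF refl])
    fix \<sigma> assume "\<sigma> \<in> ?S"
    then obtain ws where ws: "set ws \<subseteq> {i. Suc i < k}" "perm_word ws = \<sigma>"
      and P: "\<And>I J. I \<in> tuples d k \<Longrightarrow> J \<in> tuples d k \<Longrightarrow> Psigma emb d q k \<sigma> I J = Pword emb d q ws I J"
      using Psigma_eq_Pword[OF assms(1)] by blast
    have "length I = k"
      using assms(2) by (simp add: tuples_def)
    then have "matmul d (Psigma emb d q k \<sigma>) Y I J = matmul d (Pword emb d q ws) Y I J"
      by (intro matmul_cong) (simp_all add: P assms(2))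
    also have "\<dots> = Y I J"
      by (rule Pword_matmul_fixed[OF assms(2) ws(1) assms(3)])
    finally show "matmul d (Psigma emb d q k \<sigma>) Y I J = Y I J" .
  qed
  also have "(\<Sum>\<sigma>\<in>?S. Y I J) = of_nat (fact k) * Y I J"
    by (simp add: card_permutations)
  finally show ?thesis
    using emb_inverse_cancel[of "fact k"] by simp
qed

end

section \<open>Manin matrices\<close>

text \<open>The entry at rows \<open>(a, b)\<close> and columns \<open>(c, d)\<close> of
  \<open>(1 - P\<^sub>q) M\<^sub>1 M\<^sub>2 (1 + P\<^sub>p)\<close>; the Manin relations say that it vanishes
  for \<open>a < b\<close> and \<open>c < d\<close>.\<close>

definition manin_form :: "(complex \<Rightarrow> 'r::ring_1) \<Rightarrow> (nat \<Rightarrow> nat \<Rightarrow> complex)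
    \<Rightarrow> (nat \<Rightarrow> nat \<Rightarrow> complex) \<Rightarrow> (nat \<Rightarrow> nat \<Rightarrow> 'r) \<Rightarrow> nat \<Rightarrow> nat \<Rightarrow> nat \<Rightarrow> nat \<Rightarrow> 'r" where
  "manin_form emb q p M a b c d = M a c * M b d - emb (q b a) * (M b c * M a d)
     + emb (p c d) * (M a d * M b c) - emb (q b a) * (emb (p c d) * (M b d * M a c))"

context C_algebra
begin

lemma manin_form_swap_rows:
  assumes "q a b * q b a = 1"
  shows "manin_form emb q p M a b c d = - (emb (q b a) * manin_form emb q p M b a c d)"
proof -
  have "emb (q b a) * (emb (q a b) * x) = x" for x
    using assms by (simp add: mult.assoc [symmetric] mult.commute flip: emb_mult)
  then show ?thesis
    unfolding manin_form_def by (simp add: algebra_simps)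
qed

lemma manin_form_swap_cols:
  assumes "p c d * p d c = 1"
  shows "manin_form emb q p M a b c d = emb (p c d) * manin_form emb q p M a b d c"
proof -
  have "emb (p c d) * (emb (p d c) * x) = x" for x
    using assms by (simp add: mult.assoc [symmetric] flip: emb_mult)
  then show ?thesis
    unfolding manin_form_def by (simp add: algebra_simps emb_left_commute_emb)
qed

lemma manin_form_same_row:
  assumes "q a a = 1"
  shows "manin_form emb q p M a a c d = 0"
  using assms by (simp add: manin_form_def)

end

locale manin_matrix = C_algebra emb for emb :: "complex \<Rightarrow> 'r::ring_1" +
  fixes n m :: nat and q p :: "nat \<Rightarrow> nat \<Rightarrow> complex" and M :: "nat \<Rightarrow> nat \<Rightarrow> 'r"
  assumes parametric_q: "parametric_mat n q"
    and parametric_p: "parametric_mat m p"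
    and manin: "manin emb n m q p M"
begin

lemma manin_form_ordered:
  assumes "a < b" "b < n" "c < d" "d < m"
  shows "manin_form emb q p M a b c d = 0"
proof -
  have "M a c * M b d - emb (q b a * p c d) * M b d * M a c + emb (p c d) * M a d * M b c
      - emb (q b a) * M b c * M a d = 0"
    using manin assms unfolding manin_def by blast
  then show ?thesis
    unfolding manin_form_def by (simp add: emb_mult mult.assoc algebra_simps emb_left_commute_emb)
qed

lemma manin_form_same_col:
  assumes "a < n" "b < n" "c < m"
  shows "manin_form emb q p M a b c c = 0"
proof -
  have "emb (q b a) * (M b c * M a c) = M a c * M b c"
  proof (cases a b rule: linorder_cases)
    case less
    then show ?thesis
      using manin assms unfolding manin_def by (simp add: mult.assoc)
  next
    case equal
    then show ?thesis
      using parametric_q assms by (simp add: parametric_mat_def)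
  next
    case greater
    then have "M b c * M a c = emb (q a b) * M a c * M b c"
      using manin assms unfolding manin_def by blast
    moreover have "q b a * q a b = 1"
      using parametric_q assms by (simp add: parametric_mat_def)
    ultimately show ?thesis
      by (simp add: mult.assoc [symmetric] flip: emb_mult)
  qed
  moreover have "p c c = 1"
    using parametric_p assms by (simp add: parametric_mat_def)
  ultimately show ?thesis
    by (simp add: manin_form_def)
qed

lemma manin_form_eq_0:
  assumes "a < n" "b < n" "c < m" "d < m"
  shows "manin_form emb q p M a b c d = 0"
proof -
  have rows_ordered: "manin_form emb q p M a' b' c d = 0" if "a' < b'" "b' < n" for a' b'
  proof (cases c d rule: linorder_cases)
    case less
    then show ?thesis
      using manin_form_ordered that assms by blast
  next
    case equal
    then show ?thesis
      using manin_form_same_col that assms by simp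
  next
    case greater
    moreover have "p c d * p d c = 1"
      using parametric_p assms by (simp add: parametric_mat_def)
    ultimately show ?thesis
      using manin_form_swap_cols manin_form_ordered that assms by simp
  qed
  show ?thesis
  proof (cases a b rule: linorder_cases)
    case less
    then show ?thesis
      using rows_ordered assms by blast
  next
    case equal
    then show ?thesis
      using manin_form_same_row parametric_q assms by (simp add: parametric_mat_def)
  next
    case greater
    moreover have "q a b * q b a = 1"
      using parametric_q assms by (simp add: parametric_mat_def)
    ultimately show ?thesis
      using manin_form_swap_rows rows_ordered assms by simp
  qed
qed

lemma Mtensor_manin_form:
  assumes "Suc i < k" "I \<in> tuples n k" "J \<in> tuples m k"
  defines "I' \<equiv> permute_list (adj_swap i) I" and "J' \<equiv> permute_list (adj_swap i) J"
    and "x \<equiv> emb (q (I ! Suc i) (I ! i))" and "y \<equiv> emb (p (J ! i) (J ! Suc i))"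
  shows "Mtensor M I J - x * Mtensor M I' J + Mtensor M I J' * y - x * Mtensor M I' J' * y
    = Mtensor M (take i I) (take i J) * manin_form emb q p M (I ! i) (I ! Suc i) (J ! i) (J ! Suc i)
      * Mtensor M (drop (Suc (Suc i)) I) (drop (Suc (Suc i)) J)"
proof -
  have len: "length I = k" "length J = k"
    using assms(2,3) by (simp_all add: tuples_def)
  define P S where "P = Mtensor M (take i I) (take i J)"
    and "S = Mtensor M (drop (Suc (Suc i)) I) (drop (Suc (Suc i)) J)"
  have tensor: "Mtensor M (take i I @ a # b # drop (Suc (Suc i)) I) (take i J @ c # d # drop (Suc (Suc i)) J)
      = P * (M a c * M b d) * S" for a b c d
    using len by (simp add: Mtensor_def P_def S_def mult.assoc)
  have "I = take i I @ I ! i # I ! Suc i # drop (Suc (Suc i)) I"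
    "J = take i J @ J ! i # J ! Suc i # drop (Suc (Suc i)) J"
    using assms(1) len by (simp_all add: Cons_nth_drop_Suc flip: id_take_nth_drop)
  moreover have "I' = take i I @ I ! Suc i # I ! i # drop (Suc (Suc i)) I"
    "J' = take i J @ J ! Suc i # J ! i # drop (Suc (Suc i)) J"
    unfolding I'_def J'_def using assms(1) len by (simp_all add: permute_list_adj_swap_split)
  ultimately have "Mtensor M I J = P * (M (I ! i) (J ! i) * M (I ! Suc i) (J ! Suc i)) * S"
    "Mtensor M I' J = P * (M (I ! Suc i) (J ! i) * M (I ! i) (J ! Suc i)) * S"
    "Mtensor M I J' = P * (M (I ! i) (J ! Suc i) * M (I ! Suc i) (J ! i)) * S"
    "Mtensor M I' J' = P * (M (I ! Suc i) (J ! Suc i) * M (I ! i) (J ! i)) * S"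
    by (metis tensor)+
  moreover have "emb e * (P * X * S) = P * (emb e * X) * S" for e X
    by (simp add: mult.assoc emb_left_commute)
  moreover have "P * X * S * emb e = P * (emb e * X) * S" for e X
    by (metis emb_commute mult.assoc)
  ultimately have "Mtensor M I J - x * Mtensor M I' J + Mtensor M I J' * y - x * Mtensor M I' J' * y
      = P * (M (I ! i) (J ! i) * M (I ! Suc i) (J ! Suc i)) * S
        - P * (x * (M (I ! Suc i) (J ! i) * M (I ! i) (J ! Suc i))) * S
        + P * (y * (M (I ! i) (J ! Suc i) * M (I ! Suc i) (J ! i))) * S
        - P * (y * (x * (M (I ! Suc i) (J ! Suc i) * M (I ! i) (J ! i)))) * S"
    unfolding x_def y_def by (simp only:)
  also have "\<dots> = P * manin_form emb q p M (I ! i) (I ! Suc i) (J ! i) (J ! Suc i) * S"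
    unfolding manin_form_def x_def y_def by (simp add: algebra_simps emb_left_commute_emb)
  finally show ?thesis
    by (simp only: P_def S_def)
qed

lemma Mtensor_manin_relation:
  assumes "Suc i < k" "I \<in> tuples n k" "J \<in> tuples m k"
  shows "Mtensor M I J - emb (q (I ! Suc i) (I ! i)) * Mtensor M (permute_list (adj_swap i) I) J
      + Mtensor M I (permute_list (adj_swap i) J) * emb (p (J ! i) (J ! Suc i))
      - emb (q (I ! Suc i) (I ! i)) * Mtensor M (permute_list (adj_swap i) I) (permute_list (adj_swap i) J)
        * emb (p (J ! i) (J ! Suc i)) = 0"
proof -
  have "I ! i \<in> set I" "I ! Suc i \<in> set I" "J ! i \<in> set J" "J ! Suc i \<in> set J"
    using assms by (simp_all add: tuples_def)
  then have "I ! i < n" "I ! Suc i < n" "J ! i < m" "J ! Suc i < m"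
    using assms(2,3) by (auto simp: tuples_def)
  then show ?thesis
    using Mtensor_manin_form[OF assms] manin_form_eq_0 by simp
qed

lemma adjP_Mtensor_symmetrized:
  assumes "Suc i < k" "I \<in> tuples n k" "J \<in> tuples m k"
  defines "U \<equiv> \<lambda>I J. Mtensor M I J + matmul m (Mtensor M) (adjP emb p i) I J"
  shows "matmul n (adjP emb q i) U I J = U I J"
proof -
  let ?I' = "permute_list (adj_swap i) I" and ?J' = "permute_list (adj_swap i) J"
  have "length I = k" "length ?I' = k"
    using assms(2) by (simp_all add: tuples_def)
  have "matmul n (adjP emb q i) U I J = emb (q (I ! Suc i) (I ! i)) * U ?I' J"
    by (rule adjP_matmul[OF assms(1,2)])
  also have "\<dots> = emb (q (I ! Suc i) (I ! i)) * Mtensor M ?I' J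
      + emb (q (I ! Suc i) (I ! i)) * Mtensor M ?I' ?J' * emb (p (J ! i) (J ! Suc i))"
    unfolding U_def matmul_adjP[OF assms(1,3) \<open>length ?I' = k\<close>] by (simp add: distrib_left mult.assoc)
  also have "\<dots> = U I J"
    using Mtensor_manin_relation[OF assms(1-3)]
    unfolding U_def matmul_adjP[OF assms(1,3) \<open>length I = k\<close>] by (simp add: algebra_simps)
  finally show ?thesis .
qed

lemma Mtensor_antisymmetrized_adjP:
  assumes "Suc i < k" "I \<in> tuples n k" "J \<in> tuples m k"
  defines "V \<equiv> \<lambda>I J. Mtensor M I J - matmul n (adjP emb q i) (Mtensor M) I J"
  shows "matmul m V (adjP emb p i) I J = - V I J"
proof -
  let ?I' = "permute_list (adj_swap i) I" and ?J' = "permute_list (adj_swap i) J"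
  have "length I = k"
    using assms(2) by (simp add: tuples_def)
  have "matmul m V (adjP emb p i) I J = V I ?J' * emb (p (J ! i) (J ! Suc i))"
    by (rule matmul_adjP[OF assms(1,3) \<open>length I = k\<close>])
  also have "\<dots> = Mtensor M I ?J' * emb (p (J ! i) (J ! Suc i))
      - emb (q (I ! Suc i) (I ! i)) * Mtensor M ?I' ?J' * emb (p (J ! i) (J ! Suc i))"
    unfolding V_def adjP_matmul[OF assms(1,2)] by (simp add: left_diff_distrib mult.assoc)
  also have "\<dots> = - V I J"
    using Mtensor_manin_relation[OF assms(1-3)]
    unfolding V_def adjP_matmul[OF assms(1,2)] by (simp add: algebra_simps eq_neg_iff_add_eq_0)
  finally show ?thesis .
qed

lemma Antisymm_Mtensor_adjP:
  assumes "Suc i < k" "I \<in> tuples n k" "J \<in> tuples m k"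
  shows "matmul m (matmul n (Antisymm emb n q k) (Mtensor M)) (adjP emb p i) I J
    = - matmul n (Antisymm emb n q k) (Mtensor M) I J"
proof -
  define U where "U = (\<lambda>I J. Mtensor M I J + matmul m (Mtensor M) (adjP emb p i) I J)"
  let ?A = "Antisymm emb n q k"
  have "length I = k"
    using assms(2) by (simp add: tuples_def)
  have "matmul n ?A U I J = matmul n ?A (matmul n (adjP emb q i) U) I J"
    using adjP_Mtensor_symmetrized[OF assms(1) _ assms(3)]
    by (intro matmul_cong) (simp_all add: \<open>length I = k\<close> U_def)
  also have "\<dots> = matmul n (matmul n ?A (adjP emb q i)) U I J"
    by (rule matmul_assoc [symmetric])
  also have "\<dots> = matmul n (\<lambda>I J. - ?A I J) U I J"
    using Antisymm_adjP[OF parametric_q assms(1,2)]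
    by (intro matmul_cong) (simp_all add: \<open>length I = k\<close>)
  also have "\<dots> = - matmul n ?A U I J"
    by (rule matmul_uminus_left)
  finally have "matmul n ?A U I J = 0"
    by (rule eq_uminus_imp_eq_0)
  moreover have "matmul n ?A U I J
      = matmul n ?A (Mtensor M) I J + matmul m (matmul n ?A (Mtensor M)) (adjP emb p i) I J"
    unfolding U_def matmul_add_right matmul_assoc ..
  ultimately show ?thesis
    by (simp add: eq_neg_iff_add_eq_0 add.commute)
qed

lemma adjP_Mtensor_Symm:
  assumes "Suc i < k" "I \<in> tuples n k" "J \<in> tuples m k"
  shows "matmul n (adjP emb q i) (matmul m (Mtensor M) (Symm emb m p k)) I J
    = matmul m (Mtensor M) (Symm emb m p k) I J"
proof -
  define V where "V = (\<lambda>I J. Mtensor M I J - matmul n (adjP emb q i) (Mtensor M) I J)"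
  let ?S = "Symm emb m p k"
  have "length I = k"
    using assms(2) by (simp add: tuples_def)
  have "matmul m V ?S I J = matmul m V (matmul m (adjP emb p i) ?S) I J"
    using adjP_Symm[OF parametric_p assms(1) _ assms(3)]
    by (intro matmul_cong) (simp_all add: \<open>length I = k\<close>)
  also have "\<dots> = matmul m (matmul m V (adjP emb p i)) ?S I J"
    by (rule matmul_assoc [symmetric])
  also have "\<dots> = matmul m (\<lambda>I J. - V I J) ?S I J"
    using Mtensor_antisymmetrized_adjP[OF assms(1,2)]
    by (intro matmul_cong) (simp_all add: \<open>length I = k\<close> V_def)
  also have "\<dots> = - matmul m V ?S I J"
    by (rule matmul_uminus_left)
  finally have "matmul m V ?S I J = 0"
    by (rule eq_uminus_imp_eq_0)
  moreover have "matmul m V ?S I J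
      = matmul m (Mtensor M) ?S I J - matmul n (adjP emb q i) (matmul m (Mtensor M) ?S) I J"
    unfolding V_def matmul_diff_left matmul_assoc ..
  ultimately show ?thesis
    by simp
qed

lemma Antisymm_Mtensor_Antisymm:
  assumes "I \<in> tuples n k" "J \<in> tuples m k"
  shows "matmul m (matmul n (Antisymm emb n q k) (Mtensor M)) (Antisymm emb m p k) I J
    = matmul n (Antisymm emb n q k) (Mtensor M) I J"
  using assms by (intro matmul_Antisymm_absorb parametric_p Antisymm_Mtensor_adjP) (simp_all add: tuples_def)

lemma Symm_Mtensor_Symm:
  assumes "I \<in> tuples n k" "J \<in> tuples m k"
  shows "matmul n (Symm emb n q k) (matmul m (Mtensor M) (Symm emb m p k)) I J
    = matmul m (Mtensor M) (Symm emb m p k) I J"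
  using assms by (intro Symm_matmul_absorb parametric_q adjP_Mtensor_Symm)

end

theorem mainTheorem7:
  fixes emb :: "complex \<Rightarrow> 'r::ring_1"
    and n m k :: nat
    and q p :: "nat \<Rightarrow> nat \<Rightarrow> complex"
    and M :: "nat \<Rightarrow> nat \<Rightarrow> 'r"
  assumes "is_C_algebra emb"
    and "parametric_mat n q" and "parametric_mat m p"
    and "manin emb n m q p M"
    and "k \<ge> 1"
  shows "\<forall>I\<in>tuples n k. \<forall>J\<in>tuples m k.
           matmul n (Antisymm emb n q k) (Mtensor M) I J
             = matmul m (matmul n (Antisymm emb n q k) (Mtensor M)) (Antisymm emb m p k) I J
         \<and> matmul m (Mtensor M) (Symm emb m p k) I J
             = matmul m (matmul n (Symm emb n q k) (Mtensor M)) (Symm emb m p k) I J"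
proof -
  interpret manin_matrix emb n m q p M
    using assms(1-4) by unfold_locales
  show ?thesis
    using Antisymm_Mtensor_Antisymm Symm_Mtensor_Symm by (simp add: matmul_assoc)
qed

end
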